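(* Let $(X,T)$ be a dynamical system and $\mathcal{F}$ a family. (i) If $\mathcal{F}$ is free, then $\omega_{\mathcal{F}}(x)\subset\omega_T(x)$ for every $x\in X$. Moreover, if $(X,T)$ has a nonrecurrent point and $\omega_{\mathcal{F}}(x)\subset\omega_T(x)$ for every $x\in X$, then $\mathcal{F}$ is free. (ii) If $\mathcal{F}$ is free and has the finite intersection property, then it has the strong finite intersection property.
   Context: A dynamical system $(X,T)$: $X$ is a compact metric space with more than one point and without isolated points, $T:X\to X$ a continuous surjection. A family is a collection $\mathcal{F}$ of subsets of $\mathbb{Z}_+$ that is hereditary upward. $\mathcal{F}$ is free if the intersection of all its elements is empty. $\omega_{\mathcal{F}}(x)=\bigcap_{F\in\mathcal{F}}\overline{\{T^ix:i\in F\}}$; $\omega_T(x)=\bigcap_{n\ge1}\overline{\{T^kx:k\ge n\}}$. A point $x$ is recurrent if $x\in\omega_T(x)$. $\mathcal{F}$ has the finite intersection property if every finite subcollection has nonempty intersection, and the strong finite intersection property if every finite subcollection has infinite intersection. *)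

theory Defs
  imports "HOL-Analysis.Analysis"
begin

definition dynamical_system :: "'a::metric_space set \<Rightarrow> ('a \<Rightarrow> 'a) \<Rightarrow> bool" where
  "dynamical_system X T \<longleftrightarrow>
     compact X \<and> (\<exists>x\<in>X. \<exists>y\<in>X. x \<noteq> y) \<and> (\<forall>x\<in>X. x islimpt X) \<and>
     continuous_on X T \<and> T ` X = X"

text \<open>A family: a collection of subsets of Z+ (= nat) that is hereditary upward.\<close>
definition family :: "nat set set \<Rightarrow> bool" where
  "family \<F> \<longleftrightarrow> (\<forall>A B. A \<in> \<F> \<longrightarrow> A \<subseteq> B \<longrightarrow> B \<in> \<F>)"

definition free_family :: "nat set set \<Rightarrow> bool" where
  "free_family \<F> \<longleftrightarrow> \<Inter>\<F> = {}"

definition omega_fam :: "'a::metric_space set \<Rightarrow> ('a \<Rightarrow> 'a) \<Rightarrow> nat set set \<Rightarrow> 'a \<Rightarrow> 'a set" where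
  "omega_fam X T \<F> x = X \<inter> (\<Inter>F\<in>\<F>. closure {(T ^^ i) x | i. i \<in> F})"

definition omega_T :: "('a::metric_space \<Rightarrow> 'a) \<Rightarrow> 'a \<Rightarrow> 'a set" where
  "omega_T T x = (\<Inter>n\<in>{1..}. closure {(T ^^ k) x | k. k \<ge> n})"

definition recurrent :: "('a::metric_space \<Rightarrow> 'a) \<Rightarrow> 'a \<Rightarrow> bool" where
  "recurrent T x \<longleftrightarrow> x \<in> omega_T T x"

definition fip :: "nat set set \<Rightarrow> bool" where
  "fip \<F> \<longleftrightarrow> (\<forall>\<G>. \<G> \<subseteq> \<F> \<longrightarrow> finite \<G> \<longrightarrow> \<Inter>\<G> \<noteq> {})"

definition strong_fip :: "nat set set \<Rightarrow> bool" where
  "strong_fip \<F> \<longleftrightarrow> (\<forall>\<G>. \<G> \<subseteq> \<F> \<longrightarrow> finite \<G> \<longrightarrow> infinite (\<Inter>\<G>))"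

end

theory Submission
  imports Defs
begin

text \<open>(i) If a point y lies in the \<F>-limit set of x but outside the closure of the orbit tail
from time n on, then, since \<F> is upward hereditary, every member of \<F> contains a time j < n
with T^j x = y. Freeness forbids a single such time, so y is hit at two different times;
the orbit of x is then eventually periodic through y, and y lies in every tail after all.
Conversely, a common element i of all members of \<F> puts T^i z into the \<F>-limit set of z,
and by surjectivity every nonrecurrent point has this form.
(ii) Removing from a finite intersection each of its (finitely many) elements by one member of
the free family \<F> yields a finite subfamily with empty intersection.\<close>

lemma funpow_cycle:
  fixes T :: "'a \<Rightarrow> 'a"
  assumes "(T ^^ (a + p)) x = (T ^^ a) x"
  shows "(T ^^ (a + m * p)) x = (T ^^ a) x"
proof (induction m)
  case (Suc m)
  have "(T ^^ (a + Suc m * p)) x = (T ^^ (p + (a + m * p))) x"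
    by (simp add: algebra_simps)
  also have "\<dots> = (T ^^ p) ((T ^^ a) x)"
    using Suc by (simp only: funpow_add comp_apply)
  also have "\<dots> = (T ^^ (a + p)) x"
    by (simp only: add.commute[of a p] funpow_add comp_apply)
  finally show ?case using assms by simp
qed simp

lemma repeated_orbit_point_in_tail:
  fixes T :: "'a \<Rightarrow> 'a"
  assumes "(T ^^ a) x = (T ^^ b) x" and "a \<noteq> b"
  shows "(T ^^ a) x \<in> {(T ^^ k) x | k. k \<ge> n}"
proof -
  obtain c d where cd: "c < d" "(T ^^ c) x = (T ^^ d) x" "(T ^^ a) x = (T ^^ c) x"
    using assms by (metis linorder_neqE_nat)
  have "(T ^^ (c + (d - c))) x = (T ^^ c) x"
    using cd(1,2) by simp
  then have "(T ^^ (c + n * (d - c))) x = (T ^^ c) x"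
    by (rule funpow_cycle)
  moreover have "n * 1 \<le> n * (d - c)"
    using cd(1) by (intro mult_le_mono2) simp
  then have "n \<le> c + n * (d - c)"
    by linarith
  ultimately show ?thesis
    using cd(3) by (metis (mono_tags, lifting) mem_Collect_eq)
qed

lemma closure_orbit_Un_tail:
  fixes T :: "'a::t1_space \<Rightarrow> 'a"
  assumes "y \<in> closure {(T ^^ i) x | i. i \<in> G \<union> {n..}}"
    and "y \<notin> closure {(T ^^ k) x | k. k \<ge> n}"
  shows "\<exists>j\<in>G. j < n \<and> (T ^^ j) x = y"
proof -
  let ?head = "(\<lambda>i. (T ^^ i) x) ` {i\<in>G. i < n}"
  have "{(T ^^ i) x | i. i \<in> G \<union> {n..}} = ?head \<union> {(T ^^ k) x | k. k \<ge> n}"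
    by (auto simp: not_le)
  moreover have "closure ?head = ?head"
    by (simp add: finite_imp_closed)
  ultimately have "y \<in> ?head"
    using assms by simp
  then show ?thesis by auto
qed

lemma omega_fam_subset_omega_T:
  assumes "family \<F>" and "free_family \<F>"
  shows "omega_fam X T \<F> x \<subseteq> omega_T T x"
proof
  fix y assume y: "y \<in> omega_fam X T \<F> x"
  show "y \<in> omega_T T x"
    unfolding omega_T_def
  proof (rule INT_I, rule ccontr)
    fix n :: nat
    assume not_tail: "y \<notin> closure {(T ^^ k) x | k. k \<ge> n}"
    have hit: "\<exists>j\<in>G. j < n \<and> (T ^^ j) x = y" if "G \<in> \<F>" for G
    proof (rule closure_orbit_Un_tail[OF _ not_tail])
      have "G \<union> {n..} \<in> \<F>"
        using \<open>family \<F>\<close> that unfolding family_def by blast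
      then show "y \<in> closure {(T ^^ i) x | i. i \<in> G \<union> {n..}}"
        using y unfolding omega_fam_def by blast
    qed
    have no_common: "\<Inter>\<F> = {}"
      using \<open>free_family \<F>\<close> unfolding free_family_def .
    then obtain G where "G \<in> \<F>" by blast
    then obtain j where j: "(T ^^ j) x = y" using hit by blast
    obtain G' where G': "G' \<in> \<F>" "j \<notin> G'" using no_common by blast
    obtain j' where "j' \<in> G'" "(T ^^ j') x = y" using hit[OF G'(1)] by blast
    with G'(2) j have "(T ^^ j') x = (T ^^ j) x" "j' \<noteq> j" by auto
    then have "(T ^^ j') x \<in> {(T ^^ k) x | k. k \<ge> n}"
      by (rule repeated_orbit_point_in_tail)
    then have "y \<in> {(T ^^ k) x | k. k \<ge> n}"
      using \<open>(T ^^ j') x = y\<close> by simp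
    with not_tail show False
      using closure_subset[of "{(T ^^ k) x | k. k \<ge> n}"] by blast
  qed
qed

lemma orbit_tail_funpow:
  "{(T ^^ k) ((T ^^ i) z) | k. k \<ge> n} = {(T ^^ k) z | k. k \<ge> n + i}"
proof (intro set_eqI iffI)
  fix w assume "w \<in> {(T ^^ k) ((T ^^ i) z) | k. k \<ge> n}"
  then obtain k where "k \<ge> n" "w = (T ^^ (k + i)) z"
    by (auto simp: funpow_add)
  then show "w \<in> {(T ^^ k) z | k. k \<ge> n + i}"
    by auto
next
  fix w assume "w \<in> {(T ^^ k) z | k. k \<ge> n + i}"
  then obtain k where k: "k \<ge> n + i" "w = (T ^^ k) z" by blast
  then have "w = (T ^^ (k - i + i)) z" by simp
  then have "w = (T ^^ (k - i)) ((T ^^ i) z)"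
    by (simp only: funpow_add comp_apply)
  moreover have "n \<le> k - i"
    using k(1) by simp
  ultimately show "w \<in> {(T ^^ k) ((T ^^ i) z) | k. k \<ge> n}"
    by blast
qed

lemma omega_T_subset_omega_T_funpow: "omega_T T z \<subseteq> omega_T T ((T ^^ i) z)"
  unfolding omega_T_def orbit_tail_funpow by auto

lemma funpow_image_eq:
  assumes "T ` X = X"
  shows "(T ^^ n) ` X = X"
proof (induction n)
  case (Suc n)
  have "(T ^^ Suc n) ` X = T ` (T ^^ n) ` X"
    by (simp add: image_comp)
  then show ?case using Suc assms by simp
qed simp

lemma free_if_omega_fam_subset_omega_T:
  assumes "T ` X = X" and "x0 \<in> X" and "\<not> recurrent T x0"
    and subset: "\<forall>x\<in>X. omega_fam X T \<F> x \<subseteq> omega_T T x"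
  shows "free_family \<F>"
  unfolding free_family_def
proof (rule ccontr)
  assume "\<Inter>\<F> \<noteq> {}"
  then obtain i where i: "\<forall>F\<in>\<F>. i \<in> F" by auto
  obtain z where z: "z \<in> X" "(T ^^ i) z = x0"
    using funpow_image_eq[OF \<open>T ` X = X\<close>, of i] \<open>x0 \<in> X\<close> by (metis imageE)
  have "x0 \<in> closure {(T ^^ j) z | j. j \<in> F}" if "F \<in> \<F>" for F
  proof (rule closure_subset[THEN subsetD])
    show "x0 \<in> {(T ^^ j) z | j. j \<in> F}"
      using i z(2) that by blast
  qed
  then have "x0 \<in> omega_fam X T \<F> z"
    unfolding omega_fam_def using \<open>x0 \<in> X\<close> by blast
  then have "x0 \<in> omega_T T ((T ^^ i) z)"
    using subset z(1) omega_T_subset_omega_T_funpow by blast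
  then show False
    using \<open>\<not> recurrent T x0\<close> z(2) unfolding recurrent_def by simp
qed

lemma strong_fip_if_free_fip:
  assumes "free_family \<F>" and "fip \<F>"
  shows "strong_fip \<F>"
  unfolding strong_fip_def
proof (intro allI impI notI)
  fix \<G> assume \<G>: "\<G> \<subseteq> \<F>" "finite \<G>" and "finite (\<Inter>\<G>)"
  have "\<forall>s. \<exists>F\<in>\<F>. s \<notin> F"
    using \<open>free_family \<F>\<close> unfolding free_family_def by blast
  then obtain avoid where avoid: "\<forall>s. avoid s \<in> \<F> \<and> s \<notin> avoid s"
    by metis
  let ?\<G>' = "\<G> \<union> avoid ` \<Inter>\<G>"
  have "?\<G>' \<subseteq> \<F>" "finite ?\<G>'"
    using \<G> \<open>finite (\<Inter>\<G>)\<close> avoid by auto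
  moreover have "\<Inter>?\<G>' = {}"
    using avoid by blast
  ultimately show False
    using \<open>fip \<F>\<close> unfolding fip_def by blast
qed

theorem proposition2p2:
  fixes X :: "'a::metric_space set" and T :: "'a \<Rightarrow> 'a" and \<F> :: "nat set set"
  assumes "dynamical_system X T" and "family \<F>"
  shows "(free_family \<F> \<longrightarrow> (\<forall>x\<in>X. omega_fam X T \<F> x \<subseteq> omega_T T x))
       \<and> (((\<exists>x\<in>X. \<not> recurrent T x) \<and> (\<forall>x\<in>X. omega_fam X T \<F> x \<subseteq> omega_T T x))
            \<longrightarrow> free_family \<F>)
       \<and> (free_family \<F> \<and> fip \<F> \<longrightarrow> strong_fip \<F>)"
proof -
  have "T ` X = X"
    using \<open>dynamical_system X T\<close> unfolding dynamical_system_def by blast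
  then show ?thesis
    using omega_fam_subset_omega_T[OF \<open>family \<F>\<close>] free_if_omega_fam_subset_omega_T
      strong_fip_if_free_fip by blast
qed

end
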